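(* Let $n,m,N$ be positive integers, $\mathbf{x}=(x_1,\ldots,x_n)$, and let $p_1,\ldots,p_N,q_1,\ldots,q_N,g_1,\ldots,g_m\in\mathbb{R}[\mathbf{x}]$. Let $\mathbf{K}=\{\mathbf{x}\in\mathbb{R}^n\mid g_j(\mathbf{x})\ge 0,\ j=1,\ldots,m\}$ and assume that $\mathbf{K}$ is compact and $q_i>0$ on $\mathbf{K}$ for every $i\in[N]$. Let $\rho=\inf_{\mathbf{x}\in\mathbf{K}}\sum_{i=1}^N p_i(\mathbf{x})/q_i(\mathbf{x})$. Consider the problem \[ \sup_{c\in\mathbb{R},\,h_2,\ldots,h_N\in\mathbb{R}[\mathbf{x}]}\ c\quad\text{s.t.}\quad p_1(\mathbf{x})+\Big(\sum_{i=2}^N h_i(\mathbf{x})-c\Big)q_1(\mathbf{x})\ge 0\ \ \forall\mathbf{x}\in\mathbf{K},\qquad p_i(\mathbf{x})-h_i(\mathbf{x})q_i(\mathbf{x})\ge 0\ \ \forall\mathbf{x}\in\mathbf{K},\ i=2,\ldots,N. \] Then the optimal value of this problem equals $\rho$.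
   Context: $[N]=\{1,\ldots,N\}$. $\mathbb{R}[\mathbf{x}]$ is the ring of real polynomials in $\mathbf{x}$. *)

theory Defs
  imports "HOL-Analysis.Analysis"
begin

end

theory Submission
  imports Defs
begin

(* Weak duality holds pointwise: p_i - h_i q_i >= 0 with q_i > 0 says h_i <= p_i/q_i on K, so a
   feasible c lies below p_1/q_1 + sum h_i <= sum p_i/q_i. Conversely, the ratios p_i/q_i are
   continuous on the compact set K, so by Stone-Weierstrass each has a polynomial
   under-approximation h_i within e/N, which makes c = rho - e feasible. *)

lemma SUP_ereal_eq_INF_ereal:
  fixes C :: "real set" and f :: "'a \<Rightarrow> real"
  assumes below: "\<And>c x. c \<in> C \<Longrightarrow> x \<in> K \<Longrightarrow> c \<le> f x"
    and approx: "\<And>r e. (\<And>x. x \<in> K \<Longrightarrow> r \<le> f x) \<Longrightarrow> e > 0 \<Longrightarrow> r - e \<in> C"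
  shows "(SUP c\<in>C. ereal c) = (INF x\<in>K. ereal (f x))"
proof (rule antisym)
  show "(SUP c\<in>C. ereal c) \<le> (INF x\<in>K. ereal (f x))"
    by (intro SUP_least INF_greatest) (simp add: below)
  have real_below_SUP: "ereal r \<le> (SUP c\<in>C. ereal c)"
    if "ereal r \<le> (INF x\<in>K. ereal (f x))" for r
  proof (rule ereal_le_epsilon2)
    fix e :: real assume "e > 0"
    moreover have "\<And>x. x \<in> K \<Longrightarrow> r \<le> f x" using that by (auto simp: le_INF_iff)
    ultimately have "ereal (r - e) \<le> (SUP c\<in>C. ereal c)" by (intro SUP_upper approx)
    then show "ereal r \<le> (SUP c\<in>C. ereal c) + ereal e"
      by (metis add_right_mono diff_add_cancel plus_ereal.simps(1))
  qed
  show "(INF x\<in>K. ereal (f x)) \<le> (SUP c\<in>C. ereal c)"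
  proof (rule dense_le)
    fix y assume y: "y < (INF x\<in>K. ereal (f x))"
    then show "y \<le> (SUP c\<in>C. ereal c)"
      by (cases y) (auto intro: real_below_SUP)
  qed
qed

lemma real_polynomial_function_below_approx:
  fixes f :: "'a::euclidean_space \<Rightarrow> real"
  assumes "compact K" "continuous_on K f" "e > 0"
  shows "\<exists>h. real_polynomial_function h \<and> (\<forall>x\<in>K. h x \<le> f x \<and> f x - e \<le> h x)"
proof -
  obtain g where g: "real_polynomial_function g" "\<And>x. x \<in> K \<Longrightarrow> \<bar>f x - g x\<bar> < e / 2"
    using Stone_Weierstrass_real_polynomial_function assms by (metis half_gt_zero)
  have "real_polynomial_function (\<lambda>x. g x - e / 2)"
    using g(1) by (intro real_polynomial_function_diff real_polynomial_function.intros(2))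
  moreover have "g x - e / 2 \<le> f x \<and> f x - e \<le> g x - e / 2" if "x \<in> K" for x
    using g(2)[OF that] by arith
  ultimately show ?thesis
    by (intro exI[of _ "\<lambda>x. g x - e / 2"]) auto
qed

lemma le_ratio_sum_of_certificate:
  fixes p q h :: "nat \<Rightarrow> 'a \<Rightarrow> real" and p\<^sub>0 q\<^sub>0 :: "'a \<Rightarrow> real"
  assumes q\<^sub>0_pos: "\<And>x. x \<in> K \<Longrightarrow> q\<^sub>0 x > 0"
    and q_pos: "\<And>i x. i \<in> I \<Longrightarrow> x \<in> K \<Longrightarrow> q i x > 0"
    and cert\<^sub>0: "\<forall>x\<in>K. p\<^sub>0 x + ((\<Sum>i\<in>I. h i x) - c) * q\<^sub>0 x \<ge> 0"
    and cert: "\<forall>i\<in>I. \<forall>x\<in>K. p i x - h i x * q i x \<ge> 0"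
    and x: "x \<in> K"
  shows "c \<le> p\<^sub>0 x / q\<^sub>0 x + (\<Sum>i\<in>I. p i x / q i x)"
proof -
  have "c \<le> p\<^sub>0 x / q\<^sub>0 x + (\<Sum>i\<in>I. h i x)"
    using bspec[OF cert\<^sub>0 x] q\<^sub>0_pos[OF x] by (simp add: field_simps)
  also have "(\<Sum>i\<in>I. h i x) \<le> (\<Sum>i\<in>I. p i x / q i x)"
    using cert q_pos x by (intro sum_mono) (simp add: pos_le_divide_eq)
  finally show ?thesis by simp
qed

lemma exists_polynomial_certificate:
  fixes p q :: "nat \<Rightarrow> 'a::euclidean_space \<Rightarrow> real" and p\<^sub>0 q\<^sub>0 :: "'a \<Rightarrow> real"
  assumes K: "compact K"
    and cont: "\<And>i. i \<in> I \<Longrightarrow> continuous_on K (p i) \<and> continuous_on K (q i)"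
    and q_pos: "\<And>i x. i \<in> I \<Longrightarrow> x \<in> K \<Longrightarrow> q i x > 0"
    and q\<^sub>0_pos: "\<And>x. x \<in> K \<Longrightarrow> q\<^sub>0 x > 0"
    and r: "\<And>x. x \<in> K \<Longrightarrow> r \<le> p\<^sub>0 x / q\<^sub>0 x + (\<Sum>i\<in>I. p i x / q i x)"
    and e: "e > 0"
  shows "\<exists>h. (\<forall>i\<in>I. real_polynomial_function (h i)) \<and>
    (\<forall>x\<in>K. p\<^sub>0 x + ((\<Sum>i\<in>I. h i x) - (r - e)) * q\<^sub>0 x \<ge> 0) \<and>
    (\<forall>i\<in>I. \<forall>x\<in>K. p i x - h i x * q i x \<ge> 0)"
proof -
  define d where "d = e / (card I + 1)"
  have d: "d > 0" "card I * d \<le> e"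
    using e by (simp_all add: d_def field_simps)
  have ratio_approx: "\<forall>i\<in>I. \<exists>h. real_polynomial_function h \<and>
      (\<forall>x\<in>K. h x \<le> p i x / q i x \<and> p i x / q i x - d \<le> h x)"
  proof
    fix i assume i: "i \<in> I"
    have "\<forall>x\<in>K. q i x \<noteq> 0"
      using q_pos[OF i] by (metis less_irrefl)
    with cont[OF i] have ratio_cont: "continuous_on K (\<lambda>x. p i x / q i x)"
      by (intro continuous_on_divide) auto
    then show "\<exists>h. real_polynomial_function h \<and>
      (\<forall>x\<in>K. h x \<le> p i x / q i x \<and> p i x / q i x - d \<le> h x)"
      by (rule real_polynomial_function_below_approx[OF K _ d(1)])
  qed
  obtain h where h: "\<forall>i\<in>I. real_polynomial_function (h i) \<and>
      (\<forall>x\<in>K. h i x \<le> p i x / q i x \<and> p i x / q i x - d \<le> h i x)"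
    using bchoice[OF ratio_approx] by blast
  have "\<forall>i\<in>I. \<forall>x\<in>K. p i x - h i x * q i x \<ge> 0"
    using h q_pos by (simp add: pos_le_divide_eq)
  moreover have "\<forall>x\<in>K. p\<^sub>0 x + ((\<Sum>i\<in>I. h i x) - (r - e)) * q\<^sub>0 x \<ge> 0"
  proof
    fix x assume x: "x \<in> K"
    have "(\<Sum>i\<in>I. p i x / q i x) - card I * d = (\<Sum>i\<in>I. p i x / q i x - d)"
      by (simp add: sum_subtractf)
    also have "\<dots> \<le> (\<Sum>i\<in>I. h i x)"
      using h x by (intro sum_mono) auto
    finally have "r - e \<le> p\<^sub>0 x / q\<^sub>0 x + (\<Sum>i\<in>I. h i x)"
      using r[OF x] d(2) by linarith
    then show "p\<^sub>0 x + ((\<Sum>i\<in>I. h i x) - (r - e)) * q\<^sub>0 x \<ge> 0"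
      using q\<^sub>0_pos[OF x] by (simp add: field_simps)
  qed
  ultimately show ?thesis
    using h by blast
qed

theorem theorem3p1:
  fixes p q :: "nat \<Rightarrow> (real^'n \<Rightarrow> real)"
    and g :: "nat \<Rightarrow> (real^'n \<Rightarrow> real)"
    and N m :: nat
  assumes "N \<ge> 1" and "m \<ge> 1"
    and "\<forall>i\<in>{1..N}. real_polynomial_function (p i) \<and> real_polynomial_function (q i)"
    and "\<forall>j\<in>{1..m}. real_polynomial_function (g j)"
    and "compact {x. \<forall>j\<in>{1..m}. g j x \<ge> 0}"
    and "\<forall>i\<in>{1..N}. \<forall>x\<in>{x. \<forall>j\<in>{1..m}. g j x \<ge> 0}. q i x > 0"
  shows "(SUP c \<in> {c. \<exists>h :: nat \<Rightarrow> (real^'n \<Rightarrow> real).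
              (\<forall>i\<in>{2..N}. real_polynomial_function (h i)) \<and>
              (\<forall>x\<in>{x. \<forall>j\<in>{1..m}. g j x \<ge> 0}.
                  p 1 x + ((\<Sum>i=2..N. h i x) - c) * q 1 x \<ge> 0) \<and>
              (\<forall>i\<in>{2..N}. \<forall>x\<in>{x. \<forall>j\<in>{1..m}. g j x \<ge> 0}.
                  p i x - h i x * q i x \<ge> 0)}. ereal c)
         = (INF x \<in> {x. \<forall>j\<in>{1..m}. g j x \<ge> 0}. ereal (\<Sum>i=1..N. p i x / q i x))"
  (is "(SUP c \<in> ?C. ereal c) = (INF x \<in> ?K. ereal (?f x))")
proof -
  have split: "?f x = p 1 x / q 1 x + (\<Sum>i=2..N. p i x / q i x)" for x
    using assms(1) by (simp add: sum.atLeast_Suc_atMost numeral_2_eq_2)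
  have q_pos: "q i x > 0" if "i \<in> {2..N}" "x \<in> ?K" for i x
    using assms(6) that by auto
  have q1_pos: "q 1 x > 0" if "x \<in> ?K" for x
    using assms(1,6) that by auto
  have below: "c \<le> ?f x" if "c \<in> ?C" "x \<in> ?K" for c x
  proof -
    from that(1) obtain h
      where cert\<^sub>1: "\<forall>x\<in>?K. p 1 x + ((\<Sum>i=2..N. h i x) - c) * q 1 x \<ge> 0"
        and cert: "\<forall>i\<in>{2..N}. \<forall>x\<in>?K. p i x - h i x * q i x \<ge> 0"
      by blast
    have "c \<le> p 1 x / q 1 x + (\<Sum>i=2..N. p i x / q i x)"
      by (rule le_ratio_sum_of_certificate[where K = ?K and I = "{2..N}",
            OF q1_pos q_pos cert\<^sub>1 cert that(2)])
    then show ?thesis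
      using split[of x] by linarith
  qed
  have approx: "r - e \<in> ?C" if r: "\<And>x. x \<in> ?K \<Longrightarrow> r \<le> ?f x" and e: "e > 0" for r e
  proof -
    have cont: "continuous_on ?K (p i) \<and> continuous_on ?K (q i)" if "i \<in> {2..N}" for i
      using assms(3) that
      by (auto intro!: continuous_at_imp_continuous_on continuous_real_polymonial_function)
    have r_split: "r \<le> p 1 x / q 1 x + (\<Sum>i=2..N. p i x / q i x)" if "x \<in> ?K" for x
      using r[OF that] split[of x] by linarith
    show ?thesis
      unfolding mem_Collect_eq
      by (rule exists_polynomial_certificate[OF assms(5) cont q_pos q1_pos r_split e])
  qed
  show ?thesis
    by (rule SUP_ereal_eq_INF_ereal[of ?C ?K ?f, OF below approx])
qed

end
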